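(* The invariant probability $\mu$ of the kernel $M$ has no atom; in particular $\mu(\{0\})=0$.
   Context: $M$ is the Markov kernel $M(x,\cdot)=\frac16\sum_{i=1}^6\delta_{z_i(x)}$ on $[0,1/2]$, where for $x\in[0,1/2]$: $z_1(x)=\frac{3x}{2+2x}$; $z_2(x)=\frac{3x}{2-x}$ if $x<2/7$ and $\frac{2-4x}{2-x}$ if $x\ge2/7$; $z_3(x)=\frac{1+x}{3-3x}$ if $x<1/5$ and $\frac{2-4x}{3-3x}$ if $x\ge1/5$; $z_4(x)=\frac{1+x}{4-2x}$; $z_5(x)=\frac{1-2x}{4-2x}$; $z_6(x)=\frac{1-2x}{3}$. $M$ has a unique invariant probability measure, denoted $\mu$. *)

theory Defs
  imports "HOL-Probability.Probability"
begin

definition zmap :: "nat \<Rightarrow> real \<Rightarrow> real" where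
  "zmap i x =
    (if i = 1 then 3 * x / (2 + 2 * x)
     else if i = 2 then (if x < 2/7 then 3 * x / (2 - x) else (2 - 4 * x) / (2 - x))
     else if i = 3 then (if x < 1/5 then (1 + x) / (3 - 3 * x) else (2 - 4 * x) / (3 - 3 * x))
     else if i = 4 then (1 + x) / (4 - 2 * x)
     else if i = 5 then (1 - 2 * x) / (4 - 2 * x)
     else (1 - 2 * x) / 3)"

definition kernelM :: "real \<Rightarrow> real set \<Rightarrow> real" where
  "kernelM x A = (1/6) * (\<Sum>i\<in>{1..6::nat}. indicator A (zmap i x))"

definition state_space :: "real measure" where
  "state_space = restrict_space borel {0..1/2}"

definition M_invariant_prob :: "real measure \<Rightarrow> bool" where
  "M_invariant_prob \<mu> \<longleftrightarrow>
     prob_space \<mu> \<and> sets \<mu> = sets state_space \<and>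
     (\<forall>A\<in>sets \<mu>. emeasure \<mu> A = (\<integral>\<^sup>+ x. ennreal (kernelM x A) \<partial>\<mu>))"

end

theory Submission
  imports Defs
begin

text \<open>Write \<open>a y = \<mu>{y}\<close>. Invariance bounds \<open>6 a(y)\<close> by the total mass of the atoms at the
  preimages of \<open>y\<close> under the branches of \<open>z\<^sub>1, \<dots>, z\<^sub>6\<close>. As \<open>\<mu>\<close> is finite, there are only
  finitely many atoms of mass \<open>\<ge> \<epsilon>\<close>, so if some atom exists, the largest atom mass \<open>m\<close>
  is attained, and attained at a least point \<open>y\<close>. At \<open>y = 1/2\<close> and at \<open>y = 0\<close> the bound forces
  \<open>a(y) \<le> m/2\<close>, hence \<open>0 < y < 1/2\<close>. There the preimages under the first branch of \<open>z\<^sub>3\<close>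
  and under \<open>z\<^sub>6\<close> lie on opposite sides of \<open>0\<close>, and so do those under \<open>z\<^sub>4\<close> and \<open>z\<^sub>5\<close>; each
  pair therefore carries mass at most \<open>m\<close>. What remains forces \<open>a(c) \<ge> m\<close> at the preimage
  \<open>c = 2y/(3+y) < y\<close> under the first branch of \<open>z\<^sub>2\<close>, contradicting the minimality of \<open>y\<close>.\<close>

lemma (in finite_measure) finite_atoms_ge:
  assumes "e > 0"
  shows "finite {x. e \<le> measure M {x}}"
proof (rule ccontr)
  assume infinite: "infinite {x. e \<le> measure M {x}}"
  obtain n :: nat where n: "measure M (space M) < real n * e"
    using reals_Archimedean3[OF assms] by blast
  obtain B where B: "finite B" "card B = n" "B \<subseteq> {x. e \<le> measure M {x}}"
    using infinite_arbitrarily_large[OF infinite] by blast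
  have atoms_sets: "{x} \<in> sets M" if "x \<in> B" for x
    using B(3) that assms measure_notin_sets[of "{x}" M] by force
  have "real n * e = (\<Sum>x\<in>B. e)"
    using B(2) by simp
  also have "\<dots> \<le> (\<Sum>x\<in>B. measure M {x})"
    using B(3) by (intro sum_mono) auto
  also have "\<dots> = measure M B"
    using B(1) atoms_sets by (intro measure_eq_sum_singleton[symmetric]) auto
  also have "\<dots> \<le> measure M (space M)"
    by (rule bounded_measure)
  finally show False
    using n by simp
qed

lemma ex_least_maximizer:
  fixes f :: "'a::linorder \<Rightarrow> real"
  assumes finite_levels: "\<And>e. e > 0 \<Longrightarrow> finite {x. e \<le> f x}"
    and "f p > 0"
  obtains y where "\<And>x. f x \<le> f y" and "\<And>x. f x = f y \<Longrightarrow> y \<le> x"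
proof -
  define B where "B = {x. f p \<le> f x}"
  have "finite B" "p \<in> B"
    using finite_levels[OF \<open>f p > 0\<close>] by (simp_all add: B_def)
  define m where "m = Max (f ` B)"
  have "f p \<le> m"
    using \<open>finite B\<close> \<open>p \<in> B\<close> by (simp add: m_def)
  have max: "f x \<le> m" for x
  proof (cases "x \<in> B")
    case True
    then show ?thesis
      using \<open>finite B\<close> by (simp add: m_def)
  next
    case False
    then show ?thesis
      using \<open>f p \<le> m\<close> by (simp add: B_def)
  qed
  define A where "A = {x \<in> B. f x = m}"
  have "m \<in> f ` B"
    unfolding m_def using \<open>finite B\<close> \<open>p \<in> B\<close> by (intro Max_in) auto
  then have "finite A" "A \<noteq> {}"
    using \<open>finite B\<close> by (auto simp: A_def)
  define y where "y = Min A"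
  have "y \<in> A"
    unfolding y_def using \<open>finite A\<close> \<open>A \<noteq> {}\<close> by (rule Min_in)
  then have "f y = m" "y \<in> B"
    by (simp_all add: A_def)
  moreover have "y \<le> x" if "f x = m" for x
  proof -
    have "x \<in> B"
      using that \<open>f y = m\<close> \<open>y \<in> B\<close> by (simp add: B_def)
    then show ?thesis
      using that \<open>finite A\<close> by (simp add: y_def A_def)
  qed
  ultimately show ?thesis
    using that max by metis
qed

lemma sum_doubleton_le:
  fixes f :: "'a \<Rightarrow> 'b::ordered_comm_monoid_add"
  assumes "0 \<le> f u"
  shows "(\<Sum>w\<in>{u, v}. f w) \<le> f u + f v"
  using assms by (cases "u = v") (simp_all add: add_increasing2)

text \<open>Candidate preimages of \<open>y\<close> under \<open>z\<^sub>i\<close>, one per branch. They are collected in a set, not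
  summed with multiplicity: at \<open>y = 1/2\<close> both branches of \<open>z\<^sub>2\<close>, and both of \<open>z\<^sub>3\<close>, share their
  preimage, and counting it twice would lose the bound on the atom at \<open>1/2\<close>.\<close>
definition zmap_inv :: "nat \<Rightarrow> real \<Rightarrow> real set" where
  "zmap_inv i y =
    (if i = 1 then {2 * y / (3 - 2 * y)}
     else if i = 2 then {2 * y / (3 + y), (2 - 2 * y) / (4 - y)}
     else if i = 3 then {(3 * y - 1) / (3 * y + 1), (2 - 3 * y) / (4 - 3 * y)}
     else if i = 4 then {(4 * y - 1) / (1 + 2 * y)}
     else if i = 5 then {(1 - 4 * y) / (2 - 2 * y)}
     else {(1 - 3 * y) / 2})"

lemma zmap_inv_zmap:
  assumes "0 \<le> x" "x \<le> 1/2"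
  shows "x \<in> zmap_inv i (zmap i x)"
proof -
  consider "i = 1" | "i = 2" "x < 2/7" | "i = 2" "2/7 \<le> x" | "i = 3" "x < 1/5" | "i = 3" "1/5 \<le> x"
    | "i = 4" | "i = 5" | "i \<notin> {1..5}"
    by force
  then show ?thesis
    by cases (use assms in \<open>simp_all add: zmap_def zmap_inv_def field_simps\<close>)
qed

context
  fixes a :: "real \<Rightarrow> real"
  assumes nonneg: "\<And>x. 0 \<le> a x"
    and vanish_outside: "\<And>x. x \<notin> {0..1/2} \<Longrightarrow> a x = 0"
    and balance: "\<And>y. 6 * a y \<le> (\<Sum>i\<in>{1..6}. \<Sum>w\<in>zmap_inv i y. a w)"
begin

context
  fixes m :: real
  assumes bounded: "\<And>x. a x \<le> m"
begin

lemma atom_half_le: "a (1/2) \<le> m / 2"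
proof -
  have "6 * a (1/2) \<le> 2 * a (1/2) + a (2/7) + a (1/5)"
    using balance[of "1/2"] vanish_outside[of "-1"] vanish_outside[of "-1/4"]
    by (simp add: numeral_eq_Suc zmap_inv_def)
  then show ?thesis
    using bounded[of "2/7"] bounded[of "1/5"] by simp
qed

lemma atom_zero_le: "a 0 \<le> m / 2"
proof -
  have "6 * a 0 \<le> 2 * a 0 + 4 * a (1/2)"
    using balance[of 0] vanish_outside[of "-1"]
    by (simp add: numeral_eq_Suc zmap_inv_def)
  then show ?thesis
    using atom_half_le by simp
qed

lemma opposite_atoms_le:
  assumes "u < 0 \<or> v < 0 \<or> u = 0 \<and> v = 0"
  shows "a u + a v \<le> m"
  using assms atom_zero_le bounded[of u] bounded[of v] vanish_outside[of u] vanish_outside[of v]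
  by auto

lemma atom_interior_le:
  assumes "0 < y" "y < 1/2"
  shows "6 * a y \<le> 5 * m + a (2 * y / (3 + y))"
proof -
  have z3_z6_preimages: "a ((3 * y - 1) / (3 * y + 1)) + a ((1 - 3 * y) / 2) \<le> m"
    by (rule opposite_atoms_le, cases "3 * y" "1::real" rule: linorder_cases)
      (use assms in \<open>simp_all add: divide_neg_pos\<close>)
  have z4_z5_preimages: "a ((4 * y - 1) / (1 + 2 * y)) + a ((1 - 4 * y) / (2 - 2 * y)) \<le> m"
    by (rule opposite_atoms_le, cases "4 * y" "1::real" rule: linorder_cases)
      (use assms in \<open>simp_all add: divide_neg_pos\<close>)
  have "6 * a y \<le> a (2 * y / (3 - 2 * y)) + (\<Sum>w\<in>{2 * y / (3 + y), (2 - 2 * y) / (4 - y)}. a w)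
      + (\<Sum>w\<in>{(3 * y - 1) / (3 * y + 1), (2 - 3 * y) / (4 - 3 * y)}. a w)
      + a ((4 * y - 1) / (1 + 2 * y)) + a ((1 - 4 * y) / (2 - 2 * y)) + a ((1 - 3 * y) / 2)"
    using balance[of y] by (simp add: numeral_eq_Suc zmap_inv_def)
  then show ?thesis
    using z3_z6_preimages z4_z5_preimages bounded[of "2 * y / (3 - 2 * y)"] bounded[of "(2 - 2 * y) / (4 - y)"]
      bounded[of "(2 - 3 * y) / (4 - 3 * y)"]
      sum_doubleton_le[of a "2 * y / (3 + y)" "(2 - 2 * y) / (4 - y)", OF nonneg]
      sum_doubleton_le[of a "(3 * y - 1) / (3 * y + 1)" "(2 - 3 * y) / (4 - 3 * y)", OF nonneg]
    by linarith
qed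

end

lemma balanced_atoms_vanish:
  assumes finite_levels: "\<And>e. e > 0 \<Longrightarrow> finite {x. e \<le> a x}"
  shows "a p = 0"
proof (rule ccontr)
  assume "a p \<noteq> 0"
  then have "a p > 0"
    using nonneg[of p] by simp
  then obtain y where max: "\<And>x. a x \<le> a y" and least: "\<And>x. a x = a y \<Longrightarrow> y \<le> x"
    using ex_least_maximizer[OF finite_levels] by blast
  have "a y > 0"
    using max[of p] \<open>a p > 0\<close> by simp
  moreover have "y \<noteq> 0" "y \<noteq> 1/2"
    using \<open>a y > 0\<close> atom_zero_le[OF max] atom_half_le[OF max] by force+
  ultimately have "0 < y" "y < 1/2"
    using vanish_outside[of y] by fastforce+
  then have "a y \<le> a (2 * y / (3 + y))"
    using atom_interior_le[OF max \<open>0 < y\<close> \<open>y < 1/2\<close>] by simp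
  moreover have "2 * y / (3 + y) < y"
    using \<open>0 < y\<close> by (simp add: field_simps add_pos_pos)
  ultimately show False
    using least max[of "2 * y / (3 + y)"] by fastforce
qed

end

locale M_invariant_measure =
  fixes \<mu> :: "real measure"
  assumes invariant: "M_invariant_prob \<mu>"
begin

sublocale prob_space \<mu>
  using invariant by (simp add: M_invariant_prob_def)

lemma sets_eq: "sets \<mu> = sets (restrict_space borel {0..1/2})"
  using invariant by (simp add: M_invariant_prob_def state_space_def)

lemma space_eq: "space \<mu> = {0..1/2}"
  using sets_eq_imp_space_eq[OF sets_eq] by (simp add: space_restrict_space)

lemma finite_Int_sets:
  assumes "finite F"
  shows "F \<inter> {0..1/2} \<in> sets \<mu>"
proof -
  have "F \<inter> {0..1/2} \<in> sets borel"
    using assms by (intro borel_closed closed_Int finite_imp_closed closed_atLeastAtMost)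
  then show ?thesis
    using sets_restrict_space_iff[of "{0..1/2::real}" borel] by (simp add: sets_eq)
qed

lemma singleton_sets:
  assumes "x \<in> {0..1/2}"
  shows "{x} \<in> sets \<mu>"
proof -
  have "{x} = {x} \<inter> {0..1/2}"
    using assms by blast
  then show ?thesis
    using finite_Int_sets[of "{x}"] by (metis finite.emptyI finite.insertI)
qed

lemma measure_singleton_outside:
  assumes "x \<notin> {0..1/2}"
  shows "measure \<mu> {x} = 0"
proof (rule measure_notin_sets)
  have "\<not> {x} \<subseteq> space \<mu>"
    using assms by (simp add: space_eq)
  then show "{x} \<notin> sets \<mu>"
    using sets.sets_into_space by blast
qed

lemma measure_finite_Int:
  assumes "finite F"
  shows "measure \<mu> (F \<inter> {0..1/2}) = (\<Sum>w\<in>F. measure \<mu> {w})"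
proof -
  have "measure \<mu> (F \<inter> {0..1/2}) = (\<Sum>w\<in>F \<inter> {0..1/2}. measure \<mu> {w})"
    using assms by (intro measure_eq_sum_singleton finite_Int singleton_sets emeasure_finite) auto
  also have "\<dots> = (\<Sum>w\<in>F. measure \<mu> {w})"
    using assms measure_singleton_outside by (intro sum.mono_neutral_left) auto
  finally show ?thesis .
qed

lemma kernelM_singleton_le:
  assumes "x \<in> {0..1/2}"
  shows "kernelM x {y} \<le> (1/6) * (\<Sum>i\<in>{1..6}. indicator (zmap_inv i y \<inter> {0..1/2}) x)"
  unfolding kernelM_def
proof (intro mult_left_mono sum_mono)
  fix i
  show "indicat_real {y} (zmap i x) \<le> indicator (zmap_inv i y \<inter> {0..1/2}) x"
    using assms zmap_inv_zmap[of x i] by (auto simp: indicator_def)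
qed simp

lemma atom_balance: "6 * measure \<mu> {y} \<le> (\<Sum>i\<in>{1..6}. \<Sum>w\<in>zmap_inv i y. measure \<mu> {w})"
proof (cases "y \<in> {0..1/2}")
  case True
  define h where "h x = (1/6) * (\<Sum>i\<in>{1..6}. indicat_real (zmap_inv i y \<inter> {0..1/2}) x)" for x
  have finite_inv: "finite (zmap_inv i y)" for i
    by (simp add: zmap_inv_def)
  have integrable_indicator: "integrable \<mu> (indicat_real (zmap_inv i y \<inter> {0..1/2}))" for i
    using finite_Int_sets[OF finite_inv] by (simp add: less_top[symmetric])
  have integrable_h: "integrable \<mu> h"
    unfolding h_def using integrable_indicator by simp
  have "ennreal (measure \<mu> {y}) = emeasure \<mu> {y}"
    by (rule emeasure_eq_measure[symmetric])
  also have "\<dots> = (\<integral>\<^sup>+ x. ennreal (kernelM x {y}) \<partial>\<mu>)"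
    using invariant singleton_sets[OF True] by (simp add: M_invariant_prob_def)
  also have "\<dots> \<le> (\<integral>\<^sup>+ x. ennreal (h x) \<partial>\<mu>)"
    unfolding h_def using kernelM_singleton_le space_eq
    by (intro nn_integral_mono ennreal_leI) auto
  also have "\<dots> = ennreal (\<integral>x. h x \<partial>\<mu>)"
    by (rule nn_integral_eq_integral[OF integrable_h]) (simp add: h_def sum_nonneg)
  also have "(\<integral>x. h x \<partial>\<mu>) = (1/6) * (\<Sum>i\<in>{1..6}. \<Sum>w\<in>zmap_inv i y. measure \<mu> {w})"
    unfolding h_def using integrable_indicator finite_Int_sets[OF finite_inv]
    by (simp add: integral_sum measure_finite_Int[OF finite_inv])
  finally show ?thesis
    by (simp add: ennreal_le_iff sum_nonneg)
next
  case False
  then have "measure \<mu> {y} = 0"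
    by (rule measure_singleton_outside)
  then show ?thesis
    by (simp add: sum_nonneg)
qed

end

theorem lemma16:
  fixes \<mu> :: "real measure"
  assumes "M_invariant_prob \<mu>"
  shows "(\<forall>x. emeasure \<mu> {x} = 0) \<and> emeasure \<mu> {0} = 0"
proof -
  interpret M_invariant_measure \<mu>
    using assms by unfold_locales
  have "measure \<mu> {x} = 0" for x
    by (rule balanced_atoms_vanish[of "\<lambda>x. measure \<mu> {x}", OF measure_nonneg
          measure_singleton_outside atom_balance finite_atoms_ge])
  then have "emeasure \<mu> {x} = 0" for x
    by (simp only: emeasure_eq_measure ennreal_0)
  then show ?thesis
    by blast
qed

end
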